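(* Let $G$ be an infinite compact metrizable abelian group with normalized Haar measure $m$, and let $\rho$ be an admissible (semi)metric on $(G,m)$ invariant under all translations. Then there exists a sequence $(g_n)$ of elements of $G$ that converges to $0$ both in the group topology of $G$ and with respect to $\rho$ (i.e. $\rho(0,g_n)\to 0$).
   Context: A measurable $\rho:G\times G\to\mathbb R_+$ is an admissible (semi)metric if (1) it is a semimetric (resp. metric) in the usual sense on a set of full measure and $\int\int\rho\,dm\,dm<\infty$, and (2) the completion of $(G,\rho)$, or of the quotient of $G$ by the partition into classes $\{y:\rho(x,y)=0\}$ in the semimetric case, is a Polish space on which $m$ (resp. the quotient measure) is a Borel probability measure (the Borel $\sigma$-algebra being dense mod $0$ in the measurable $\sigma$-algebra). Invariance means $\rho(x+h,y+h)=\rho(x,y)$ for all $h$. *)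

theory Defs
  imports "HOL-Analysis.Analysis" "HOL-Probability.Probability"
begin

definition normalized_haar :: "('a::topological_ab_group_add) measure \<Rightarrow> bool" where
  "normalized_haar M \<longleftrightarrow>
     sets M = sets borel \<and> prob_space M \<and>
     (\<forall>h. \<forall>A \<in> sets borel. emeasure M ((\<lambda>x. x + h) ` A) = emeasure M A)"

definition rho_open :: "('a \<Rightarrow> 'a \<Rightarrow> real) \<Rightarrow> 'a set \<Rightarrow> 'a set \<Rightarrow> bool" where
  "rho_open \<rho> X U \<longleftrightarrow> U \<subseteq> X \<and>
     (\<forall>x\<in>U. \<exists>e>0. \<forall>y\<in>X. \<rho> x y < e \<longrightarrow> y \<in> U)"

text \<open>Admissible semimetric on the measure space (space M, completion M).
  (1) rho is measurable, nonnegative, a semimetric on a set X of full measure,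
      with finite double integral;
  (2) the completion of the quotient metric space is Polish, i.e. (X, rho) is separable;
      the quotient measure is a Borel measure, i.e. every rho-Borel set is measurable;
      and rho-Borel sets are dense mod 0 in the measurable sigma-algebra.\<close>
definition admissible_semimetric :: "'a measure \<Rightarrow> ('a \<Rightarrow> 'a \<Rightarrow> real) \<Rightarrow> bool" where
  "admissible_semimetric M \<rho> \<longleftrightarrow>
     (\<lambda>(x,y). \<rho> x y) \<in> borel_measurable (completion (M \<Otimes>\<^sub>M M)) \<and>
     (\<forall>x y. 0 \<le> \<rho> x y) \<and>
     (\<integral>\<^sup>+ p. ennreal (\<rho> (fst p) (snd p)) \<partial>(completion (M \<Otimes>\<^sub>M M))) < \<infinity> \<and>
     (\<exists>X \<in> sets (completion M). space M - X \<in> null_sets (completion M) \<and>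
        (\<forall>x\<in>X. \<rho> x x = 0) \<and>
        (\<forall>x\<in>X. \<forall>y\<in>X. \<rho> x y = \<rho> y x) \<and>
        (\<forall>x\<in>X. \<forall>y\<in>X. \<forall>z\<in>X. \<rho> x z \<le> \<rho> x y + \<rho> y z) \<and>
        (\<exists>D. countable D \<and> D \<subseteq> X \<and> (\<forall>x\<in>X. \<forall>e>0. \<exists>d\<in>D. \<rho> x d < e)) \<and>
        sigma_sets X (Collect (rho_open \<rho> X)) \<subseteq> sets (completion M) \<and>
        (\<forall>A \<in> sets (completion M). \<exists>B \<in> sigma_sets X (Collect (rho_open \<rho> X)).
            (A - B) \<union> (B - A) \<in> null_sets (completion M)))"

end

theory Submission
  imports Defs
begin

text \<open>Haar measure on an infinite group has no atoms, so every set of positive measure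
  contains two distinct points. Given a neighbourhood \<open>U\<close> of \<open>0\<close> and \<open>e > 0\<close>, choose \<open>V\<close>
  with \<open>V - V \<subseteq> U\<close>; finitely many translates \<open>c + V\<close> cover the compact group and countably
  many \<open>\<rho>\<close>-balls of radius \<open>e/2\<close> cover a conull set, so some intersection of a ball with a
  translate has positive measure. Two distinct points \<open>x, y\<close> in it give \<open>y - x \<in> U\<close>,
  \<open>y - x \<noteq> 0\<close> and, by invariance, \<open>\<rho> 0 (y - x) = \<rho> x y < e\<close>. Shrinking \<open>U\<close> and \<open>e\<close> along
  a countable base at \<open>0\<close> yields the sequence.\<close>

lemma (in prob_space) emeasure_singleton_eq_0_if_uniform:
  assumes "infinite (space M)"
    and sets_singleton: "\<And>x. x \<in> space M \<Longrightarrow> {x} \<in> events"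
    and uniform: "\<And>x y. x \<in> space M \<Longrightarrow> y \<in> space M \<Longrightarrow> emeasure M {x} = emeasure M {y}"
    and a: "a \<in> space M"
  shows "emeasure M {a} = 0"
proof -
  have bound: "of_nat n * emeasure M {a} \<le> 1" for n
  proof -
    obtain F where F: "finite F" "card F = n" "F \<subseteq> space M"
      using infinite_arbitrarily_large[OF assms(1)] by blast
    have "(\<Sum>x\<in>F. emeasure M {x}) = (\<Sum>x\<in>F. emeasure M {a})"
      using F(3) a by (intro sum.cong refl uniform) auto
    then have "of_nat n * emeasure M {a} = (\<Sum>x\<in>F. emeasure M {x})"
      using F(2) by simp
    also have "\<dots> = emeasure M F"
      using F sets_singleton by (intro emeasure_eq_sum_singleton[symmetric]) auto
    also have "\<dots> \<le> 1" by (rule emeasure_le_1)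
    finally show ?thesis .
  qed
  obtain r where r: "emeasure M {a} = ennreal r" "0 \<le> r"
    using emeasure_eq_measure measure_nonneg by blast
  have "r \<le> 0"
  proof (rule ccontr)
    assume "\<not> r \<le> 0"
    then obtain n :: nat where n: "1 < real n * r"
      using reals_Archimedean3[of r] by auto
    have "ennreal (real n * r) = of_nat n * emeasure M {a}"
      using r by (simp add: ennreal_mult ennreal_of_nat_eq_real_of_nat)
    with bound[of n] have "ennreal (real n * r) \<le> 1"
      by simp
    with n show False
      by simp
  qed
  with r show ?thesis by simp
qed

lemma normalized_haar_singleton_null:
  fixes m :: "('a::topological_ab_group_add) measure"
  assumes "infinite (UNIV :: 'a set)"
    and "t1_space (euclidean :: 'a topology)"
    and haar: "normalized_haar m"
  shows "{a} \<in> null_sets m"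
proof -
  have sets_m: "sets m = sets borel" and "prob_space m"
    and invariant: "\<And>h A. A \<in> sets borel \<Longrightarrow> emeasure m ((\<lambda>x. x + h) ` A) = emeasure m A"
    using haar unfolding normalized_haar_def by auto
  have space_m: "space m = UNIV"
    using sets_eq_imp_space_eq[OF sets_m] by simp
  have singleton_borel: "{x::'a} \<in> sets borel" for x
    using assms(2) by (simp add: t1_space_closedin_singleton borel_closed)
  have translate: "emeasure m {x} = emeasure m {0}" for x
    using invariant[OF singleton_borel[of 0], of x] by simp
  have "emeasure m {a} = 0"
  proof (rule prob_space.emeasure_singleton_eq_0_if_uniform[OF \<open>prob_space m\<close>])
    show "emeasure m {x} = emeasure m {y}" for x y
      by (rule trans[OF translate translate[symmetric]])
  qed (use singleton_borel sets_m space_m assms(1) in auto)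
  then show ?thesis
    using singleton_borel sets_m by (simp add: null_sets_def)
qed

lemma completion_not_null_obtains_two_points:
  assumes "\<And>x. {x} \<in> null_sets M"
    and "A \<notin> null_sets (completion M)"
  obtains x y where "x \<in> A" "y \<in> A" "x \<noteq> y"
proof -
  obtain a where "a \<in> A"
    using assms(2) by fastforce
  have "\<not> A \<subseteq> {a}"
    using assms null_sets_completionI null_sets_completion_subset by blast
  with \<open>a \<in> A\<close> show ?thesis
    using that by blast
qed

lemma (in prob_space) countable_cover_obtains_not_null:
  assumes "countable I"
    and "space M \<subseteq> (\<Union>i\<in>I. A i) \<union> N"
    and "N \<in> null_sets M"
  obtains i where "i \<in> I" "A i \<notin> null_sets M"
proof (rule ccontr)
  assume "\<not> thesis"
  with that have "(\<Union>i\<in>I. A i) \<union> N \<in> null_sets M"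
    using assms(1,3) by (auto intro: null_sets_UN')
  then have "space M \<in> null_sets M"
    using assms(2) null_sets_subset by blast
  then show False
    by (simp add: null_sets_def emeasure_space_1)
qed

lemma open_zero_neighbourhood_diff_subset:
  fixes U :: "'a::topological_group_add set"
  assumes "open U" "0 \<in> U"
  obtains V where "open V" "0 \<in> V" "\<And>a b. a \<in> V \<Longrightarrow> b \<in> V \<Longrightarrow> b - a \<in> U"
proof -
  have "open {p::'a \<times> 'a. snd p - fst p \<in> U}"
    by (intro open_vimage[of U "\<lambda>p. snd p - fst p", unfolded vimage_def] assms continuous_intros)
  moreover have "(0, 0) \<in> {p::'a \<times> 'a. snd p - fst p \<in> U}"
    using assms by simp
  ultimately obtain A B where "open A" "open B" "(0, 0) \<in> A \<times> B"
    "A \<times> B \<subseteq> {p. snd p - fst p \<in> U}"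
    by (rule open_prod_elim)
  then show ?thesis
    by (intro that[of "A \<inter> B"]) auto
qed

lemma exists_nonzero_rho_small_in_neighbourhood:
  fixes m :: "('a::topological_ab_group_add) measure"
    and \<rho> :: "'a \<Rightarrow> 'a \<Rightarrow> real"
  assumes "infinite (UNIV :: 'a set)"
    and "compact (UNIV :: 'a set)"
    and "t1_space (euclidean :: 'a topology)"
    and haar: "normalized_haar m"
    and "admissible_semimetric m \<rho>"
    and invariant: "\<forall>x y h. \<rho> (x + h) (y + h) = \<rho> x y"
    and "open U" "0 \<in> U" "e > 0"
  shows "\<exists>g\<in>U. g \<noteq> 0 \<and> \<rho> 0 g < e"
proof -
  have "prob_space m"
    using haar unfolding normalized_haar_def by auto
  obtain X D where null_compl: "space m - X \<in> null_sets (completion m)"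
    and sym: "\<forall>x\<in>X. \<forall>y\<in>X. \<rho> x y = \<rho> y x"
    and triangle: "\<forall>x\<in>X. \<forall>y\<in>X. \<forall>z\<in>X. \<rho> x z \<le> \<rho> x y + \<rho> y z"
    and D: "countable D" "D \<subseteq> X" "\<forall>x\<in>X. \<forall>e>0. \<exists>d\<in>D. \<rho> x d < e"
    using \<open>admissible_semimetric m \<rho>\<close> unfolding admissible_semimetric_def by blast
  obtain V where V: "open V" "0 \<in> V" "\<And>a b. a \<in> V \<Longrightarrow> b \<in> V \<Longrightarrow> b - a \<in> U"
    using open_zero_neighbourhood_diff_subset[OF \<open>open U\<close> \<open>0 \<in> U\<close>] by blast
  define T where "T c = {x. x - c \<in> V}" for c :: 'a
  have "open (T c)" for c
    unfolding T_def by (intro open_vimage[of V "\<lambda>x. x - c", unfolded vimage_def] V continuous_intros)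
  moreover have "UNIV \<subseteq> (\<Union>c. T c)"
    using V(2) unfolding T_def by auto
  ultimately obtain C where "finite C" and C_cover: "UNIV \<subseteq> (\<Union>c\<in>C. T c)"
    by (rule compactE_image[OF \<open>compact UNIV\<close>])
  define B where "B d = {x\<in>X. \<rho> d x < e / 2}" for d
  have "space (completion m) \<subseteq> (\<Union>(d, c)\<in>D \<times> C. B d \<inter> T c) \<union> (space m - X)"
  proof clarify
    fix x assume "x \<in> space (completion m)" "x \<notin> space m - X"
    then have "x \<in> X" by simp
    have "\<exists>d\<in>D. \<rho> x d < e / 2"
      using D(3) \<open>x \<in> X\<close> half_gt_zero[OF \<open>e > 0\<close>] by blast
    then obtain d where "d \<in> D" "\<rho> x d < e / 2" ..
    moreover obtain c where "c \<in> C" "x \<in> T c"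
      using C_cover by blast
    ultimately have "x \<in> B d \<inter> T c"
      using sym D(2) \<open>x \<in> X\<close> unfolding B_def by auto
    with \<open>d \<in> D\<close> \<open>c \<in> C\<close> show "x \<in> (\<Union>(d, c)\<in>D \<times> C. B d \<inter> T c)"
      by blast
  qed
  moreover have "countable (D \<times> C)"
    using D(1) \<open>finite C\<close> by (simp add: countable_finite)
  ultimately obtain d c where "d \<in> D" "c \<in> C" and not_null: "B d \<inter> T c \<notin> null_sets (completion m)"
    using prob_space.countable_cover_obtains_not_null[OF
        prob_space.prob_space_completion[OF \<open>prob_space m\<close>] _ _ null_compl]
    by (smt (verit) SigmaE case_prod_conv)
  obtain x y where xy: "x \<in> B d \<inter> T c" "y \<in> B d \<inter> T c" "x \<noteq> y"
    using completion_not_null_obtains_two_points[OF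
        normalized_haar_singleton_null[OF assms(1,3) haar] not_null] .
  have "d \<in> X" "x \<in> X" "y \<in> X"
    using \<open>d \<in> D\<close> D(2) xy unfolding B_def by auto
  have "\<rho> 0 (y - x) = \<rho> x y"
    using invariant[rule_format, where x = x and y = y and h = "- x"] by simp
  also have "\<dots> \<le> \<rho> d x + \<rho> d y"
    using triangle[rule_format, OF \<open>x \<in> X\<close> \<open>d \<in> X\<close> \<open>y \<in> X\<close>]
      sym[rule_format, OF \<open>x \<in> X\<close> \<open>d \<in> X\<close>] by simp
  also have "\<dots> < e"
    using xy unfolding B_def by simp
  finally have "\<rho> 0 (y - x) < e" .
  moreover have "y - x \<in> U"
    using V(3)[of "x - c" "y - c"] xy unfolding T_def by simp
  ultimately show ?thesis
    using xy(3) by (intro bexI[of _ "y - x"]) auto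
qed

lemma metrizable_obtains_sequence_from_neighbourhoods:
  fixes a :: "'a::topological_space"
  assumes "metrizable_space (euclidean :: 'a topology)"
    and "\<And>n U. open U \<Longrightarrow> a \<in> U \<Longrightarrow> \<exists>x\<in>U. P n x"
  obtains g where "\<And>n. P n (g n)" "g \<longlonglongrightarrow> a"
proof -
  obtain M and d :: "'a \<Rightarrow> 'a \<Rightarrow> real" where "Metric_space M d"
    and topology: "euclidean = Metric_space.mtopology M d"
    using assms(1) unfolding metrizable_space_def by blast
  interpret Metric_space M d by fact
  have in_M: "x \<in> M" for x
    using topspace_mtopology topology by (metis UNIV_I topspace_euclidean)
  have "\<exists>x\<in>mball a (inverse (Suc n)). P n x" for n
  proof (rule assms(2))
    show "open (mball a (inverse (Suc n)))"
      unfolding open_openin topology by (rule openin_mball)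
    show "a \<in> mball a (inverse (Suc n))"
      by (simp add: in_M)
  qed
  then obtain g where g: "\<And>n. g n \<in> mball a (inverse (Suc n))" "\<And>n. P n (g n)"
    by metis
  have "(\<lambda>n. d (g n) a) \<longlonglongrightarrow> 0"
  proof (rule tendsto_sandwich[OF _ _ tendsto_const LIMSEQ_inverse_real_of_nat])
    show "\<forall>\<^sub>F n in sequentially. d (g n) a \<le> inverse (Suc n)"
      using g(1) commute by (simp add: less_imp_le)
  qed (simp add: in_M)
  then have "limitin mtopology g a sequentially"
    unfolding limitin_metric_dist_null by (simp add: in_M)
  then show ?thesis
    using that g(2) unfolding topology[symmetric] by auto
qed

theorem corollary1:
  fixes m :: "('a::topological_ab_group_add) measure"
    and \<rho> :: "'a \<Rightarrow> 'a \<Rightarrow> real"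
  assumes "infinite (UNIV :: 'a set)"
    and "compact (UNIV :: 'a set)"
    and "metrizable_space (euclidean :: 'a topology)"
    and "normalized_haar m"
    and "admissible_semimetric m \<rho>"
    and "\<forall>x y h. \<rho> (x + h) (y + h) = \<rho> x y"
  shows "\<exists>g :: nat \<Rightarrow> 'a. (\<forall>n. g n \<noteq> 0) \<and> g \<longlonglongrightarrow> 0 \<and> (\<lambda>n. \<rho> 0 (g n)) \<longlonglongrightarrow> 0"
proof -
  have "t1_space (euclidean :: 'a topology)"
    using assms(3) by (rule metrizable_imp_t1_space)
  then have small: "\<exists>x\<in>U. x \<noteq> 0 \<and> \<rho> 0 x < inverse (Suc n)" if "open U" "0 \<in> U" for n U
    by (rule exists_nonzero_rho_small_in_neighbourhood[OF assms(1,2) _ assms(4-6) that]) simp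
  obtain g where g: "\<And>n. g n \<noteq> 0 \<and> \<rho> 0 (g n) < inverse (Suc n)" "g \<longlonglongrightarrow> 0"
    using metrizable_obtains_sequence_from_neighbourhoods[where P = "\<lambda>n x. x \<noteq> 0 \<and> \<rho> 0 x < inverse (Suc n)",
          OF assms(3) small] by blast
  have "(\<lambda>n. \<rho> 0 (g n)) \<longlonglongrightarrow> 0"
  proof (rule tendsto_sandwich[OF _ _ tendsto_const LIMSEQ_inverse_real_of_nat])
    show "\<forall>\<^sub>F n in sequentially. 0 \<le> \<rho> 0 (g n)"
      using \<open>admissible_semimetric m \<rho>\<close> unfolding admissible_semimetric_def by simp
  qed (use g(1) in \<open>simp add: less_imp_le\<close>)
  with g show ?thesis by blast
qed

end
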